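(* Let $A,B$ be $n\times n$ matrices and, for integers $i,j\ge0$, let $\mathrm{sym}_{ij}(A,B)$ denote the sum of all (distinct) words in $A$ and $B$ containing exactly $i$ letters $A$ and $j$ letters $B$ (so $\mathrm{sym}_{00}=I$). (a) $[\mathrm{sym}_{i,j+1}(A,B),A]+[\mathrm{sym}_{i+1,j}(A,B),B]=0$ for all $i,j\ge0$. (b) If $A=S$ is symmetric and $B=N$ is skew-symmetric, then $\mathrm{sym}_{ij}(S,N)$ is symmetric if $j$ is even and skew-symmetric if $j$ is odd. (c) Each $\mathrm{sym}_{n-\ell,\ell}(A,B)$, $\ell=0,\dots,n$, is a linear combination of symmetrizers $\mathrm{sym}_{r,s}(A,B)$ with $r+s<n$. (d) For generic pairs $(A,B)$ (i.e., for an open dense set of pairs), the matrices $\mathrm{sym}_{k-\ell,\ell}(A,B)$, $0\le\ell\le k\le n-1$, are linearly independent. The same holds for generic pairs with $A=S$ real symmetric and $B=N$ real skew-symmetric. *)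

theory Defs
  imports "HOL-Analysis.Analysis"
begin

text \<open>A word in the letters A and B is encoded as a bool list: False = letter A, True = letter B.
  The matrix of a word is the ordered product of its letters (empty word = identity).\<close>
definition word_mat :: "'a::field^'n^'n \<Rightarrow> 'a^'n^'n \<Rightarrow> bool list \<Rightarrow> 'a^'n^'n" where
  "word_mat A B w = foldr (\<lambda>b M. (if b then B else A) ** M) w (mat 1)"

definition words :: "nat \<Rightarrow> nat \<Rightarrow> bool list set" where
  "words i j = {w. length w = i + j \<and> count_list w True = j}"

definition symz :: "nat \<Rightarrow> nat \<Rightarrow> 'a::field^'n^'n \<Rightarrow> 'a^'n^'n \<Rightarrow> 'a^'n^'n" where
  "symz i j A B = (\<Sum>w\<in>words i j. word_mat A B w)"

definition commutator :: "'a::field^'n^'n \<Rightarrow> 'a^'n^'n \<Rightarrow> 'a^'n^'n" where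
  "commutator X Y = X ** Y - Y ** X"

definition sym_skew_pairs :: "((real^'n^'n) \<times> (real^'n^'n)) set" where
  "sym_skew_pairs = {(S, N). transpose S = S \<and> transpose N = - N}"

definition lin_indep_family :: "'i set \<Rightarrow> ('i \<Rightarrow> 'v::real_vector) \<Rightarrow> bool" where
  "lin_indep_family I f \<longleftrightarrow>
     (\<forall>c. (\<Sum>i\<in>I. c i *\<^sub>R f i) = 0 \<longrightarrow> (\<forall>i\<in>I. c i = 0))"

text \<open>Index set {(k,l) | 0 \<le> l \<le> k \<le> n-1}, the family being (k,l) \<mapsto> sym_{k-l,l}.\<close>
definition low_index :: "nat \<Rightarrow> (nat \<times> nat) set" where
  "low_index n = {(k, l). l \<le> k \<and> k \<le> n - 1}"

end

theory Submission
  imports Defs "Jordan_Normal_Form.Char_Poly"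
begin

text \<open>Splitting off the first or the last letter of a word gives the two recursions
  \<open>sym(i,j) = A sym(i-1,j) + B sym(i,j-1) = sym(i-1,j) A + sym(i,j-1) B\<close>; applied to
  \<open>sym(i+1,j+1)\<close> they give (a). Transposition reverses words, which gives (b).

  For (c), \<open>(A + t B)^k = \<Sum>\<^sub>l t^l sym(k-l,l)\<close>. By Cayley--Hamilton, \<open>(A + t B)^n\<close> lies in
  the span of the lower powers, hence of the \<open>sym(r,s)\<close> with \<open>r + s < n\<close>, for every \<open>t\<close>;
  comparing coefficients of \<open>t^l\<close> gives the claim.

  For (d), independence of the family is the non-vanishing of its Gram determinant, a
  polynomial in the entries of \<open>(A, B)\<close>. Its non-vanishing set is open, and it is dense in
  every convex set containing one point where it is nonzero, because on a segment a nonzero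
  polynomial has finitely many roots. Such a point, symmetric and skew, is
  \<open>S = diag(0, \<dots>, n-1)\<close>, \<open>N = J - J^T\<close>: the entries of \<open>sym(m,l)(S,N)\<close> vanish below
  the \<open>l\<close>-th subdiagonal and on it equal \<open>h_m(q, \<dots>, q+l)\<close>, whose forward difference in
  \<open>q\<close> lowers \<open>m\<close> by one; this makes the system triangular.\<close>

section \<open>Symmetrizers\<close>

abbreviation cart_one :: "'a::{zero,one}^'n^'n" where
  "cart_one \<equiv> Finite_Cartesian_Product.mat 1"

lemma matrix_add_rdistrib_cart: "(B + C) ** A = B ** A + C ** (A::'a::semiring_1^'p^'n)"
  by (vector matrix_matrix_mult_def sum.distrib [symmetric] field_simps)

lemma matrix_diff_ldistrib_cart: "A ** (B - C) = A ** B - A ** (C::'a::ring_1^'p^'n)"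
  by (vector matrix_matrix_mult_def sum_subtractf [symmetric] field_simps)

lemma matrix_mul_sum_right: "A ** (\<Sum>x\<in>S. f x) = (\<Sum>x\<in>S. A ** f x)"
  by (induction S rule: infinite_finite_induct) (auto simp: matrix_add_ldistrib)

lemma matrix_mul_sum_left: "(\<Sum>x\<in>S. f x) ** A = (\<Sum>x\<in>S. f x ** A)"
  by (induction S rule: infinite_finite_induct) (auto simp: matrix_add_rdistrib_cart)

lemma transpose_add_cart: "transpose (A + B) = transpose A + transpose (B::'a::semiring_1^'n^'m)"
  by (vector transpose_def)

lemma transpose_zero_cart [simp]: "transpose (0::'a::semiring_1^'n^'m) = 0"
  by (vector transpose_def)

lemma transpose_sum_cart:
  "transpose (\<Sum>x\<in>S. f x) = (\<Sum>x\<in>S. transpose (f x :: 'a::semiring_1^'n^'m))"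
  by (induction S rule: infinite_finite_induct) (auto simp: transpose_add_cart)

lemma word_mat_Nil [simp]: "word_mat A B [] = cart_one"
  by (simp add: word_mat_def)

lemma word_mat_Cons [simp]: "word_mat A B (b # w) = (if b then B else A) ** word_mat A B w"
  by (simp add: word_mat_def)

lemma word_mat_append: "word_mat A B (u @ v) = word_mat A B u ** word_mat A B v"
  by (induction u) (auto simp: matrix_mul_assoc)

lemma finite_words [simp]: "finite (words i j)"
proof (rule finite_subset)
  show "words i j \<subseteq> {w. set w \<subseteq> UNIV \<and> length w = i + j}"
    by (auto simp: words_def)
qed (rule finite_lists_length_eq, simp)

lemma words_0_0: "words 0 0 = {[]}"
  by (auto simp: words_def)

lemma bij_betw_rev_words: "bij_betw rev (words i j) (words i j)"
  by (rule bij_betwI [where g = rev]) (auto simp: words_def)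

lemma words_Cons:
  assumes "i \<noteq> 0 \<or> j \<noteq> 0"
  shows "words i j = (if 0 < i then Cons False ` words (i - 1) j else {})
                   \<union> (if 0 < j then Cons True ` words i (j - 1) else {})"
proof -
  have "w \<in> words i j \<longleftrightarrow> w \<in> (if 0 < i then Cons False ` words (i - 1) j else {})
                   \<union> (if 0 < j then Cons True ` words i (j - 1) else {})" for w
  proof (cases w)
    case (Cons b v)
    then show ?thesis
      using count_le_length [of v True] by (cases b) (auto simp: words_def)
  qed (use assms in \<open>auto simp: words_def\<close>)
  then show ?thesis
    by blast
qed

lemma sum_words:
  "(\<Sum>w\<in>words i j. g w) =
     (if i = 0 \<and> j = 0 then g []
      else (if 0 < i then \<Sum>w\<in>words (i - 1) j. g (False # w) else 0)
         + (if 0 < j then \<Sum>w\<in>words i (j - 1). g (True # w) else 0))"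
proof (cases "i = 0 \<and> j = 0")
  case False
  then have "(\<Sum>w\<in>words i j. g w) =
      (\<Sum>w\<in>(if 0 < i then Cons False ` words (i - 1) j else {}). g w)
    + (\<Sum>w\<in>(if 0 < j then Cons True ` words i (j - 1) else {}). g w)"
    by (subst words_Cons) (auto intro: sum.union_disjoint)
  with False show ?thesis
    by (auto simp: sum.reindex)
qed (simp add: words_0_0)

lemma symz_0_0 [simp]: "symz 0 0 A B = cart_one"
  by (simp add: symz_def words_0_0)

lemma symz_Cons:
  "symz i j A B =
     (if i = 0 \<and> j = 0 then cart_one
      else (if 0 < i then A ** symz (i - 1) j A B else 0)
         + (if 0 < j then B ** symz i (j - 1) A B else 0))"
  unfolding symz_def by (subst sum_words) (simp add: matrix_mul_sum_right)

lemma symz_snoc: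
  "symz i j A B =
     (if i = 0 \<and> j = 0 then cart_one
      else (if 0 < i then symz (i - 1) j A B ** A else 0)
         + (if 0 < j then symz i (j - 1) A B ** B else 0))"
proof -
  have rev_sum: "symz i j A B = (\<Sum>w\<in>words i j. word_mat A B (rev w))" for i j
    unfolding symz_def by (rule sum.reindex_bij_betw [OF bij_betw_rev_words, symmetric])
  show ?thesis
    by (subst (1 2 3) rev_sum, subst sum_words)
      (simp add: word_mat_append matrix_mul_sum_left)
qed

lemma commutator_symz:
  "commutator (symz i (j + 1) A B) A + commutator (symz (i + 1) j A B) B = 0"
proof -
  have "symz (i + 1) (j + 1) A B = A ** symz i (j + 1) A B + B ** symz (i + 1) j A B"
    by (subst symz_Cons) simp
  moreover have "symz (i + 1) (j + 1) A B = symz i (j + 1) A B ** A + symz (i + 1) j A B ** B"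
    by (subst symz_snoc) simp
  ultimately show ?thesis
    unfolding commutator_def by (simp add: algebra_simps)
qed

lemma transpose_word_mat:
  fixes S N :: "real^'n^'n"
  assumes "transpose S = S" "transpose N = - N"
  shows "transpose (word_mat S N w) = (-1) ^ count_list w True *\<^sub>R word_mat S N (rev w)"
proof (induction w)
  case (Cons b w)
  have "transpose (word_mat S N (b # w)) = transpose (word_mat S N w) ** transpose (if b then N else S)"
    by (simp add: matrix_transpose_mul)
  also have "\<dots> = ((-1) ^ count_list w True *\<^sub>R word_mat S N (rev w))
                  ** ((if b then -1 else 1) *\<^sub>R (if b then N else S))"
    using Cons assms by simp
  finally show ?case
    by (simp add: word_mat_append scalar_matrix_assoc matrix_scalar_ac)
qed (simp add: transpose_mat)

lemma transpose_symz:
  fixes S N :: "real^'n^'n"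
  assumes "transpose S = S" "transpose N = - N"
  shows "transpose (symz i j S N) = (-1) ^ j *\<^sub>R symz i j S N"
proof -
  have "transpose (symz i j S N) = (\<Sum>w\<in>words i j. (-1) ^ j *\<^sub>R word_mat S N (rev w))"
    unfolding symz_def transpose_sum_cart
    by (rule sum.cong) (auto simp: transpose_word_mat [OF assms] words_def)
  also have "\<dots> = (-1) ^ j *\<^sub>R symz i j S N"
    unfolding symz_def scaleR_sum_right [symmetric]
    by (simp add: sum.reindex_bij_betw [OF bij_betw_rev_words])
  finally show ?thesis .
qed

section \<open>Cayley--Hamilton and the top-degree symmetrizers\<close>

definition from_index :: "nat \<Rightarrow> 'n::finite" where
  "from_index = (SOME h. bij_betw h {..<CARD('n)} UNIV)"

definition to_index :: "'n::finite \<Rightarrow> nat" where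
  "to_index = inv_into {..<CARD('n)} from_index"

lemma bij_betw_from_index: "bij_betw (from_index :: nat \<Rightarrow> 'n::finite) {..<CARD('n)} UNIV"
proof -
  have "\<exists>h. bij_betw h {..<CARD('n)} (UNIV :: 'n set)"
    using ex_bij_betw_nat_finite [of "UNIV :: 'n set"] by (simp add: atLeast0LessThan)
  then show ?thesis
    unfolding from_index_def by (rule someI_ex)
qed

lemma to_index_less [simp]: "to_index (x :: 'n::finite) < CARD('n)"
  using bij_betw_from_index unfolding to_index_def
  by (metis bij_betw_imp_surj_on inv_into_into lessThan_iff UNIV_I)

lemma from_index_to_index [simp]: "from_index (to_index x) = x"
  using bij_betw_from_index unfolding to_index_def
  by (metis bij_betw_inv_into_right UNIV_I)

lemma to_index_from_index [simp]: "i < CARD('n::finite) \<Longrightarrow> to_index (from_index i :: 'n) = i"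
  using bij_betw_from_index unfolding to_index_def
  by (metis bij_betw_inv_into_left lessThan_iff)

lemma to_index_eq_iff: "to_index x = to_index y \<longleftrightarrow> x = y"
  by (metis from_index_to_index)

lemma from_index_eq_iff:
  "i < CARD('n::finite) \<Longrightarrow> j < CARD('n) \<Longrightarrow> (from_index i :: 'n) = from_index j \<longleftrightarrow> i = j"
  by (metis to_index_from_index)

lemma sum_UNIV_from_index: "(\<Sum>x\<in>UNIV. f x) = (\<Sum>i<CARD('n::finite). f (from_index i :: 'n))"
  using sum.reindex_bij_betw [OF bij_betw_from_index, of f] by simp

primrec matpow :: "'a::semiring_1^'n^'n \<Rightarrow> nat \<Rightarrow> 'a^'n^'n" where
  "matpow M 0 = cart_one"
| "matpow M (Suc k) = M ** matpow M k"

lemma matpow_Suc_right: "matpow M (Suc k) = matpow M k ** M"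
  by (induction k) (simp_all add: matrix_mul_assoc)

lemma matpow_add_scaleR:
  fixes A B :: "real^'n^'n"
  shows "matpow (A + t *\<^sub>R B) k = (\<Sum>l\<le>k. t ^ l *\<^sub>R symz (k - l) l A B)"
proof (induction k)
  case (Suc k)
  have "(\<Sum>l\<le>Suc k. t ^ l *\<^sub>R symz (Suc k - l) l A B)
      = (\<Sum>l\<le>Suc k. t ^ l *\<^sub>R (if l \<le> k then A ** symz (k - l) l A B else 0))
      + (\<Sum>l\<le>Suc k. t ^ l *\<^sub>R (if 0 < l then B ** symz (Suc k - l) (l - 1) A B else 0))"
    unfolding sum.distrib [symmetric] scaleR_add_right [symmetric]
    by (rule sum.cong [OF refl], subst symz_Cons) (auto simp: Suc_diff_le)
  also have "\<dots> = (\<Sum>l\<le>k. t ^ l *\<^sub>R (A ** symz (k - l) l A B))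
                 + (\<Sum>l\<le>k. t ^ Suc l *\<^sub>R (B ** symz (k - l) l A B))"
    by (subst (2) sum.atMost_Suc_shift) (simp add: sum.atMost_Suc)
  also have "\<dots> = (A + t *\<^sub>R B) ** (\<Sum>l\<le>k. t ^ l *\<^sub>R symz (k - l) l A B)"
  proof -
    have "(A + t *\<^sub>R B) ** (c *\<^sub>R X) = c *\<^sub>R (A ** X) + (t * c) *\<^sub>R (B ** X)"
      for c and X :: "real^'n^'n"
      by (simp add: matrix_add_rdistrib_cart scalar_matrix_assoc [symmetric] matrix_scalar_ac
          scaleR_add_right mult.commute)
    then show ?thesis
      by (simp add: matrix_mul_sum_right sum.distrib)
  qed
  finally show ?case
    using Suc by simp
qed simp

text \<open>The hypothesis is \<open>(X I - M) B(X) = c(X) I\<close> for \<open>B(X) = \<Sum>\<^sub>k X\<^sup>k B\<^sub>k\<close>,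
  read coefficientwise; substituting \<open>X = M\<close> makes the sum telescope.\<close>
lemma matpow_poly_eq_0_of_factor:
  fixes M :: "real^'n^'n" and B :: "nat \<Rightarrow> real^'n^'n"
  assumes factor: "\<And>k. (if k = 0 then 0 else B (k - 1)) - M ** B k = c k *\<^sub>R cart_one"
    and vanish: "\<And>k. D \<le> k \<Longrightarrow> B k = 0"
  shows "(\<Sum>k\<le>D. c k *\<^sub>R matpow M k) = 0"
proof -
  define g where "g k = matpow M k ** (if k = 0 then 0 else B (k - 1))" for k
  have "c k *\<^sub>R matpow M k = g k - g (Suc k)" for k
  proof -
    have "c k *\<^sub>R matpow M k = matpow M k ** (c k *\<^sub>R cart_one)"
      by (simp add: matrix_scalar_ac)
    also have "\<dots> = g k - g (Suc k)"
      using matpow_Suc_right [of M k] unfolding factor [symmetric] g_def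
      by (simp add: matrix_diff_ldistrib_cart matrix_mul_assoc)
    finally show ?thesis .
  qed
  then have "(\<Sum>k\<le>D. c k *\<^sub>R matpow M k) = g 0 - g (Suc D)"
    by (simp add: sum_telescope)
  also have "\<dots> = 0"
    by (simp add: g_def vanish)
  finally show ?thesis .
qed

text \<open>Coefficient of \<open>X\<^sup>k\<close> in \<open>(X I - A) adj(X I - A) = char_poly A \<cdot> I\<close>.\<close>
lemma coeff_adj_char_poly_matrix:
  fixes A :: "'a::comm_ring_1 mat"
  assumes A: "A \<in> carrier_mat n n" and "i < n" "j < n"
  defines "Adj \<equiv> adj_mat (char_poly_matrix A)"
  shows "(if k = 0 then 0 else coeff (Adj $$ (i, j)) (k - 1))
           - (\<Sum>r<n. A $$ (i, r) * coeff (Adj $$ (r, j)) k)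
         = (if i = j then coeff (char_poly A) k else 0)"
proof -
  define C where "C = char_poly_matrix A"
  have C: "C \<in> carrier_mat n n"
    using A by (simp add: C_def)
  have Adj: "Adj \<in> carrier_mat n n"
    unfolding Adj_def C_def [symmetric] using adj_mat(1) [OF C] .
  have "(\<Sum>r<n. C $$ (i, r) * Adj $$ (r, j)) = (C * Adj) $$ (i, j)"
    using \<open>i < n\<close> \<open>j < n\<close> C Adj by (simp add: scalar_prod_def atLeast0LessThan)
  also have "\<dots> = (if i = j then char_poly A else 0)"
    using \<open>i < n\<close> \<open>j < n\<close> adj_mat(2) [OF C]
    by (simp add: Adj_def C_def char_poly_def)
  finally have "coeff (\<Sum>r<n. C $$ (i, r) * Adj $$ (r, j)) k
      = (if i = j then coeff (char_poly A) k else 0)"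
    by simp
  moreover have "coeff (\<Sum>r<n. C $$ (i, r) * Adj $$ (r, j)) k
      = (\<Sum>r<n. (if i = r then (if k = 0 then 0 else coeff (Adj $$ (r, j)) (k - 1)) else 0)
                 - A $$ (i, r) * coeff (Adj $$ (r, j)) k)"
  proof -
    have C_entry: "C $$ (i, r) = (if i = r then [:0, 1:] else 0) + [:- A $$ (i, r):]" if "r < n" for r
      using A \<open>i < n\<close> that unfolding C_def char_poly_matrix_def by simp
    have coeff_X: "coeff ([:0, 1:] * p) k = (if k = 0 then 0 else coeff p (k - 1))" for p :: "'a poly"
      by (cases k) (auto simp: coeff_pCons)
    have coeff_const: "coeff ([:a:] * p) k = a * coeff p k" for a and p :: "'a poly"
      by simp
    show ?thesis
      unfolding coeff_sum
      by (rule sum.cong [OF refl])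
        (simp add: C_entry distrib_right coeff_X coeff_const del: mult_pCons_left)
  qed
  ultimately show ?thesis
    using \<open>i < n\<close> by (simp add: sum_subtractf sum.delta')
qed

definition mat_of_cart :: "'a^'n^'n \<Rightarrow> 'a mat" where
  "mat_of_cart M = Matrix.mat CARD('n) CARD('n) (\<lambda>(i, j). M $ from_index i $ from_index j)"

lemma mat_of_cart_carrier [simp]: "mat_of_cart (M :: 'a^'n^'n) \<in> carrier_mat CARD('n) CARD('n)"
  by (simp add: mat_of_cart_def)

definition adj_coeff_cart :: "real^'n^'n \<Rightarrow> nat \<Rightarrow> real^'n^'n" where
  "adj_coeff_cart M k =
     (\<chi> x y. coeff (adj_mat (char_poly_matrix (mat_of_cart M)) $$ (to_index x, to_index y)) k)"

lemma adj_coeff_cart_factor: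
  fixes M :: "real^'n^'n"
  shows "(if k = 0 then 0 else adj_coeff_cart M (k - 1)) - M ** adj_coeff_cart M k
           = coeff (char_poly (mat_of_cart M)) k *\<^sub>R cart_one"
proof -
  define A where "A = mat_of_cart M"
  define Adj where "Adj = adj_mat (char_poly_matrix A)"
  have entry: "adj_coeff_cart M j $ x $ y = coeff (Adj $$ (to_index x, to_index y)) j" for j x y
    by (simp add: adj_coeff_cart_def Adj_def A_def)
  have "((if k = 0 then 0 else adj_coeff_cart M (k - 1)) - M ** adj_coeff_cart M k) $ x $ y
        = (coeff (char_poly A) k *\<^sub>R cart_one) $ x $ y" for x y :: 'n
  proof -
    have "(M ** adj_coeff_cart M k) $ x $ y
        = (\<Sum>r<CARD('n). A $$ (to_index x, r) * coeff (Adj $$ (r, to_index y)) k)"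
      by (simp add: matrix_matrix_mult_def entry A_def mat_of_cart_def sum_UNIV_from_index)
    then show ?thesis
      using coeff_adj_char_poly_matrix [of A "CARD('n)" "to_index x" "to_index y" k]
      by (cases "k = 0")
        (simp_all add: entry Adj_def A_def Finite_Cartesian_Product.mat_def to_index_eq_iff)
  qed
  then show ?thesis
    unfolding Finite_Cartesian_Product.vec_eq_iff A_def by blast
qed

lemma adj_coeff_cart_eventually_0:
  fixes M :: "real^'n^'n"
  shows "\<exists>D. \<forall>k\<ge>D. adj_coeff_cart M k = 0"
proof -
  define n where "n = CARD('n)"
  define Adj where "Adj = adj_mat (char_poly_matrix (mat_of_cart M))"
  define D where "D = Suc (\<Sum>i<n. \<Sum>j<n. degree (Adj $$ (i, j)))"
  have "coeff (Adj $$ (i, j)) k = 0" if "D \<le> k" "i < n" "j < n" for i j k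
  proof (rule coeff_eq_0)
    have "degree (Adj $$ (i, j)) \<le> (\<Sum>j<n. degree (Adj $$ (i, j)))"
      using that by (intro member_le_sum) auto
    also have "\<dots> \<le> (\<Sum>i<n. \<Sum>j<n. degree (Adj $$ (i, j)))"
      using that by (intro member_le_sum) auto
    finally show "degree (Adj $$ (i, j)) < k"
      using \<open>D \<le> k\<close> by (simp add: D_def)
  qed
  then show ?thesis
    by (intro exI [of _ D]) (auto simp: adj_coeff_cart_def Adj_def n_def Finite_Cartesian_Product.vec_eq_iff)
qed

lemma cayley_hamilton_cart:
  fixes M :: "real^'n^'n"
  shows "(\<Sum>k\<le>CARD('n). coeff (char_poly (mat_of_cart M)) k *\<^sub>R matpow M k) = 0"
proof -
  obtain D where "\<forall>k\<ge>D. adj_coeff_cart M k = 0"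
    using adj_coeff_cart_eventually_0 by blast
  then have "(\<Sum>k\<le>max D CARD('n). coeff (char_poly (mat_of_cart M)) k *\<^sub>R matpow M k) = 0"
    by (intro matpow_poly_eq_0_of_factor [OF adj_coeff_cart_factor]) auto
  moreover have "(\<Sum>k\<le>max D CARD('n). coeff (char_poly (mat_of_cart M)) k *\<^sub>R matpow M k)
      = (\<Sum>k\<le>CARD('n). coeff (char_poly (mat_of_cart M)) k *\<^sub>R matpow M k)"
    using degree_monic_char_poly [OF mat_of_cart_carrier [of M]]
    by (intro sum.mono_neutral_right) (auto simp: coeff_eq_0)
  ultimately show ?thesis
    by simp
qed

lemma matpow_CARD_in_span:
  fixes M :: "real^'n^'n"
  shows "matpow M CARD('n) \<in> span (matpow M ` {..<CARD('n)})"
proof -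
  define c where "c = coeff (char_poly (mat_of_cart M))"
  have "c CARD('n) = 1"
    using degree_monic_char_poly [OF mat_of_cart_carrier [of M]] by (simp add: c_def)
  then have "matpow M CARD('n) = - (\<Sum>k<CARD('n). c k *\<^sub>R matpow M k)"
    using cayley_hamilton_cart [of M]
    by (simp add: c_def lessThan_Suc_atMost [symmetric] eq_neg_iff_add_eq_0 add.commute)
  then show ?thesis
    by (auto intro: span_neg [OF span_sum [OF span_scale [OF span_base]]])
qed

lemma in_span_image_sum:
  assumes "finite J" "x \<in> span (Y ` J)"
  shows "\<exists>c. x = (\<Sum>p\<in>J. c p *\<^sub>R Y p)"
proof -
  let ?V = "{x. \<exists>c. x = (\<Sum>p\<in>J. c p *\<^sub>R Y p)}"
  have "subspace ?V"
  proof (unfold subspace_def, intro conjI ballI allI)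
    show "0 \<in> ?V"
      by (auto intro!: exI [of _ "\<lambda>_. 0"])
  next
    fix x y assume "x \<in> ?V" "y \<in> ?V"
    then obtain c d where "x = (\<Sum>p\<in>J. c p *\<^sub>R Y p)" "y = (\<Sum>p\<in>J. d p *\<^sub>R Y p)"
      by blast
    then show "x + y \<in> ?V"
      by (auto intro!: exI [of _ "\<lambda>p. c p + d p"] simp: sum.distrib scaleR_add_left)
  next
    fix r x assume "x \<in> ?V"
    then obtain c where "x = (\<Sum>p\<in>J. c p *\<^sub>R Y p)"
      by blast
    then show "r *\<^sub>R x \<in> ?V"
      by (auto intro!: exI [of _ "\<lambda>p. r * c p"] simp: scaleR_sum_right)
  qed
  moreover have "Y q \<in> ?V" if "q \<in> J" for q
  proof -
    have "(\<Sum>p\<in>J. (if p = q then 1 else 0) *\<^sub>R Y p) = (\<Sum>p\<in>J. if p = q then Y p else 0)"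
      by (rule sum.cong) auto
    then have "Y q = (\<Sum>p\<in>J. (if p = q then 1 else 0) *\<^sub>R Y p)"
      using that assms(1) by simp
    then show ?thesis
      by (intro CollectI exI)
  qed
  ultimately have "span (Y ` J) \<subseteq> ?V"
    by (intro span_minimal) auto
  then show ?thesis
    using assms(2) by blast
qed

text \<open>If \<open>z\<close> is the component of \<open>X l\<close> orthogonal to \<open>span S\<close>, then
  \<open>\<Sum>\<^sub>i t\<^sup>i (z \<bullet> X i)\<close> vanishes for all \<open>t\<close>, so \<open>z \<bullet> X l = 0\<close> and hence \<open>z = 0\<close>.\<close>
lemma poly_coeffs_in_span:
  fixes X :: "nat \<Rightarrow> 'a::euclidean_space"
  assumes "\<And>t::real. (\<Sum>i\<le>d. t ^ i *\<^sub>R X i) \<in> span S" and "l \<le> d"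
  shows "X l \<in> span S"
proof -
  obtain y z where y: "y \<in> span S" and z: "\<And>w. w \<in> span S \<Longrightarrow> inner z w = 0"
    and X: "X l = y + z"
    using orthogonal_subspace_decomp_exists [of S "X l"] unfolding real_inner_class.orthogonal_def
    by blast
  have "(\<Sum>i\<le>d. inner z (X i) * t ^ i) = 0" for t :: real
  proof -
    have "(\<Sum>i\<le>d. inner z (X i) * t ^ i) = inner z (\<Sum>i\<le>d. t ^ i *\<^sub>R X i)"
      by (simp add: inner_sum_right mult.commute)
    also have "\<dots> = 0"
      using z [OF assms(1)] .
    finally show ?thesis .
  qed
  then have "\<forall>k\<le>d. inner z (X k) = 0"
    by (simp only: polyfun_eq_0 [symmetric]) blast
  then have "inner z (X l) = 0"
    using assms(2) by blast
  moreover have "inner z y = 0"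
    using z [OF y] .
  ultimately have "z = 0"
    by (simp add: X inner_add_right)
  then show ?thesis
    using X y by simp
qed

lemma finite_pairs_sum_less: "finite {p :: nat \<times> nat. fst p + snd p < n}"
  by (rule finite_subset [of _ "{..<n} \<times> {..<n}"]) auto

lemma symz_CARD_in_span:
  fixes A B :: "real^'n^'n"
  assumes "l \<le> CARD('n)"
  shows "symz (CARD('n) - l) l A B
           \<in> span ((\<lambda>p. symz (fst p) (snd p) A B) ` {p. fst p + snd p < CARD('n)})"
    (is "_ \<in> span ?Y")
proof (rule poly_coeffs_in_span [OF _ assms])
  fix t :: real
  have mem: "symz (k - l) l A B \<in> ?Y" if "k < CARD('n)" "l \<le> k" for k l
    using that by (intro image_eqI [of _ _ "(k - l, l)"]) auto
  have "matpow (A + t *\<^sub>R B) k \<in> span ?Y" if "k < CARD('n)" for k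
    unfolding matpow_add_scaleR by (intro span_sum span_scale span_base) (use mem that in auto)
  then have "span (matpow (A + t *\<^sub>R B) ` {..<CARD('n)}) \<subseteq> span ?Y"
    by (intro span_minimal) auto
  then have "matpow (A + t *\<^sub>R B) CARD('n) \<in> span ?Y"
    using matpow_CARD_in_span by blast
  then show "(\<Sum>l\<le>CARD('n). t ^ l *\<^sub>R symz (CARD('n) - l) l A B) \<in> span ?Y"
    by (simp only: matpow_add_scaleR)
qed

section \<open>A symmetric--skew pair with independent symmetrizers\<close>

abbreviation cart_entry :: "'a^'n^'n \<Rightarrow> nat \<Rightarrow> nat \<Rightarrow> 'a" where
  "cart_entry M p q \<equiv> M $ from_index p $ from_index q"

text \<open>The witness pair: \<open>S = diag(0, 1, \<dots>, n - 1)\<close> and \<open>N = J - J\<^sup>T\<close> with \<open>J\<close> the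
  lower shift, in the order on \<open>'n\<close> given by \<open>to_index\<close>.\<close>
definition ramp_diag :: "real^'n^'n" where
  "ramp_diag = (\<chi> x y. if x = y then real (to_index x) else 0)"

definition skew_shift :: "real^'n^'n" where
  "skew_shift = (\<chi> x y. of_bool (to_index x = to_index y + 1) - of_bool (to_index y = to_index x + 1))"

abbreviation witness_symz :: "nat \<Rightarrow> nat \<Rightarrow> real^'n^'n" where
  "witness_symz m l \<equiv> symz m l ramp_diag skew_shift"

lemma transpose_ramp_diag: "transpose ramp_diag = ramp_diag"
  by (auto simp: ramp_diag_def transpose_def Finite_Cartesian_Product.vec_eq_iff)

lemma transpose_skew_shift: "transpose skew_shift = - skew_shift"
  by (auto simp: skew_shift_def transpose_def Finite_Cartesian_Product.vec_eq_iff)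

lemma witness_in_sym_skew_pairs: "(ramp_diag, skew_shift) \<in> sym_skew_pairs"
  by (simp add: sym_skew_pairs_def transpose_ramp_diag transpose_skew_shift)

lemma convex_sym_skew_pairs: "convex sym_skew_pairs"
  unfolding sym_skew_pairs_def
  by (intro subspace_imp_convex)
    (auto simp: subspace_def transpose_add_cart transpose_scalar zero_prod_def)

lemma cart_entry_mult:
  "cart_entry (A ** B) p q = (\<Sum>r<CARD('n). cart_entry A p r * cart_entry (B :: 'a::semiring_1^'n^'n) r q)"
  by (simp add: matrix_matrix_mult_def sum_UNIV_from_index)

lemma cart_entry_ramp_diag_mult:
  "p < CARD('n) \<Longrightarrow> cart_entry (ramp_diag ** M) p q = real p * cart_entry (M :: real^'n^'n) p q"
  by (simp add: cart_entry_mult ramp_diag_def from_index_eq_iff if_distrib if_distribR sum.delta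
      cong: if_cong)

lemma cart_entry_mult_ramp_diag:
  "q < CARD('n) \<Longrightarrow> cart_entry (M ** ramp_diag) p q = cart_entry (M :: real^'n^'n) p q * real q"
  by (simp add: cart_entry_mult ramp_diag_def from_index_eq_iff if_distrib if_distribR sum.delta'
      cong: if_cong)

lemma sum_lessThan_Suc_delta:
  "(\<Sum>r<n. if p = Suc r then f r else 0)
     = (if 0 < p \<and> p \<le> n then f (p - 1) else (0::'a::comm_monoid_add))"
  by (cases p) (auto simp: sum.delta')

lemma cart_entry_skew_shift_mult:
  fixes M :: "real^'n^'n"
  assumes "p < CARD('n)"
  shows "cart_entry (skew_shift ** M) p q
    = (if 0 < p then cart_entry M (p - 1) q else 0)
    - (if p + 1 < CARD('n) then cart_entry M (p + 1) q else 0)"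
proof -
  have "cart_entry (skew_shift ** M) p q
      = (\<Sum>r<CARD('n). (if p = Suc r then cart_entry M r q else 0)
                      - (if r = Suc p then cart_entry M r q else 0))"
    unfolding cart_entry_mult using assms by (intro sum.cong) (auto simp: skew_shift_def)
  then show ?thesis
    using assms by (simp add: sum_subtractf sum_lessThan_Suc_delta sum.delta)
qed

lemma cart_entry_mult_skew_shift:
  fixes M :: "real^'n^'n"
  assumes "q < CARD('n)"
  shows "cart_entry (M ** skew_shift) p q
    = (if q + 1 < CARD('n) then cart_entry M p (q + 1) else 0)
    - (if 0 < q then cart_entry M p (q - 1) else 0)"
proof -
  have "cart_entry (M ** skew_shift) p q
      = (\<Sum>r<CARD('n). (if r = Suc q then cart_entry M p r else 0)
                      - (if q = Suc r then cart_entry M p r else 0))"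
    unfolding cart_entry_mult using assms by (intro sum.cong) (auto simp: skew_shift_def)
  then show ?thesis
    using assms by (simp add: sum_subtractf sum_lessThan_Suc_delta sum.delta)
qed

lemma cart_entry_witness_symz_Cons:
  assumes "p < CARD('n)" "q < CARD('n)"
  shows "cart_entry (witness_symz m l :: real^'n^'n) p q =
    (if m = 0 \<and> l = 0 then of_bool (p = q)
     else (if 0 < m then real p * cart_entry (witness_symz (m - 1) l :: real^'n^'n) p q else 0)
        + (if 0 < l
           then (if 0 < p then cart_entry (witness_symz m (l - 1) :: real^'n^'n) (p - 1) q else 0)
              - (if p + 1 < CARD('n)
                 then cart_entry (witness_symz m (l - 1) :: real^'n^'n) (p + 1) q else 0)
           else 0))"
  using assms
  by (subst symz_Cons)
    (auto simp: cart_entry_ramp_diag_mult cart_entry_skew_shift_mult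
      Finite_Cartesian_Product.mat_def from_index_eq_iff)

lemma cart_entry_witness_symz_snoc:
  assumes "p < CARD('n)" "q < CARD('n)"
  shows "cart_entry (witness_symz m l :: real^'n^'n) p q =
    (if m = 0 \<and> l = 0 then of_bool (p = q)
     else (if 0 < m then cart_entry (witness_symz (m - 1) l :: real^'n^'n) p q * real q else 0)
        + (if 0 < l
           then (if q + 1 < CARD('n)
                 then cart_entry (witness_symz m (l - 1) :: real^'n^'n) p (q + 1) else 0)
              - (if 0 < q then cart_entry (witness_symz m (l - 1) :: real^'n^'n) p (q - 1) else 0)
           else 0))"
  using assms
  by (subst symz_snoc)
    (auto simp: cart_entry_mult_ramp_diag cart_entry_mult_skew_shift
      Finite_Cartesian_Product.mat_def from_index_eq_iff)

text \<open>Each letter \<open>N\<close> moves an entry at most one step off the diagonal.\<close>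
lemma cart_entry_witness_symz_below_band:
  assumes "p < CARD('n)" "q < CARD('n)" "q + l < p"
  shows "cart_entry (witness_symz m l :: real^'n^'n) p q = 0"
  using assms
proof (induction "m + l" arbitrary: m l p rule: less_induct)
  case less
  then show ?case
    by (subst cart_entry_witness_symz_Cons) (auto intro!: less.hyps)
qed

lemma cart_entry_witness_symz_0_subdiag:
  "q + l < CARD('n) \<Longrightarrow> cart_entry (witness_symz 0 l :: real^'n^'n) (q + l) q = 1"
proof (induction l)
  case (Suc l)
  then show ?case
    by (subst cart_entry_witness_symz_Cons)
      (auto simp: cart_entry_witness_symz_below_band)
qed (simp add: Finite_Cartesian_Product.mat_def)

lemma cart_entry_witness_symz_subdiag_diff:
  assumes "q + l + 1 < CARD('n)"
  shows "cart_entry (witness_symz (Suc m) l :: real^'n^'n) (q + 1 + l) (q + 1)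
       - cart_entry (witness_symz (Suc m) l :: real^'n^'n) (q + l) q
       = real (l + 1) * cart_entry (witness_symz m (l + 1) :: real^'n^'n) (q + (l + 1)) q"
proof -
  let ?E = "\<lambda>m l p q. cart_entry (witness_symz m l :: real^'n^'n) p q"
  have "?E (Suc m) (Suc l) (q + l + 1) q
      = real (q + l + 1) * ?E m (Suc l) (q + l + 1) q + ?E (Suc m) l (q + l) q"
    using assms
    by (subst cart_entry_witness_symz_Cons) (auto simp: cart_entry_witness_symz_below_band)
  moreover have "?E (Suc m) (Suc l) (q + l + 1) q
      = ?E m (Suc l) (q + l + 1) q * real q + ?E (Suc m) l (q + l + 1) (q + 1)"
    using assms
    by (subst cart_entry_witness_symz_snoc) (auto simp: cart_entry_witness_symz_below_band)
  ultimately show ?thesis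
    by (simp add: algebra_simps)
qed

text \<open>A discrete Vandermonde argument: the forward difference in \<open>q\<close> lowers \<open>m\<close> by one, so
  \<open>q \<mapsto> D m l q\<close> behaves like a polynomial of degree exactly \<open>m\<close>.\<close>
lemma coeffs_eq_0_of_forward_difference:
  fixes D :: "nat \<Rightarrow> nat \<Rightarrow> nat \<Rightarrow> real"
  assumes D0: "\<And>l q. q + l < n \<Longrightarrow> D 0 l q = 1"
    and diff: "\<And>m l q. q + l + 1 < n \<Longrightarrow>
                 D (Suc m) l (q + 1) - D (Suc m) l q = real (l + 1) * D m (l + 1) q"
  shows "l + d < n \<Longrightarrow> (\<And>q. q \<le> d \<Longrightarrow> (\<Sum>m\<le>d. c m * D m l q) = 0) \<Longrightarrow>
         m \<le> d \<Longrightarrow> c m = 0"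
proof (induction d arbitrary: l c m)
  case 0
  then show ?case
    using D0 [of 0 l] by force
next
  case (Suc d)
  have split: "(\<Sum>m\<le>Suc d. c m * D m l q) = c 0 + (\<Sum>m\<le>d. c (Suc m) * D (Suc m) l q)"
    if "q \<le> Suc d" for q
    using that Suc.prems(1) by (subst sum.atMost_Suc_shift) (simp add: D0)
  have "(\<Sum>m\<le>d. c (Suc m) * D m (l + 1) q) = 0" if "q \<le> d" for q
  proof -
    have "(\<Sum>m\<le>d. c (Suc m) * (D (Suc m) l (q + 1) - D (Suc m) l q)) = 0"
      using Suc.prems(2) [of q] Suc.prems(2) [of "q + 1"] split [of q] split [of "q + 1"] that
      by (simp add: sum_subtractf right_diff_distrib)
    moreover have "D (Suc m) l (q + 1) - D (Suc m) l q = real (l + 1) * D m (l + 1) q" for m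
      using diff that Suc.prems(1) by simp
    ultimately have "real (l + 1) * (\<Sum>m\<le>d. c (Suc m) * D m (l + 1) q) = 0"
      by (simp add: sum_distrib_left ac_simps)
    then show ?thesis
      by simp
  qed
  then have tail: "c (Suc m) = 0" if "m \<le> d" for m
    using Suc.IH [of "l + 1" "\<lambda>m. c (Suc m)"] Suc.prems(1) that by simp
  then have "c 0 = 0"
    using Suc.prems(2) [of 0] split [of 0] by simp
  with tail show ?case
    using Suc.prems(3) by (cases m) auto
qed

lemma finite_low_index: "finite (low_index n)"
  by (rule finite_subset [of _ "{..n} \<times> {..n}"]) (auto simp: low_index_def)

text \<open>On the \<open>l\<close>-th subdiagonal the members with fewer than \<open>l\<close> letters \<open>N\<close> vanish.\<close>
lemma vanishing_witness_combination_subdiag: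
  fixes c :: "nat \<times> nat \<Rightarrow> real"
  assumes zero: "(\<Sum>i\<in>low_index CARD('n).
                    c i *\<^sub>R (case i of (k, l) \<Rightarrow> (witness_symz (k - l) l :: real^'n^'n))) = 0"
    and above: "\<And>k l'. (k, l') \<in> low_index CARD('n) \<Longrightarrow> l < l' \<Longrightarrow> c (k, l') = 0"
    and "q + l < CARD('n)"
  shows "(\<Sum>m\<le>CARD('n) - 1 - l. c (m + l, l) * cart_entry (witness_symz m l :: real^'n^'n) (q + l) q) = 0"
proof -
  let ?I = "low_index CARD('n)"
  let ?e = "\<lambda>i. cart_entry (case i of (k, l) \<Rightarrow> (witness_symz (k - l) l :: real^'n^'n))
                             (q + l) q"
  have "0 = (\<Sum>i\<in>?I. c i * ?e i)"
    using arg_cong [OF zero, of "\<lambda>M. cart_entry M (q + l) q"] by simp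
  also have "\<dots> = (\<Sum>i\<in>?I. if snd i = l then c i * ?e i else 0)"
  proof (rule sum.cong [OF refl])
    fix i assume "i \<in> ?I"
    moreover obtain k l' where i: "i = (k, l')"
      by fastforce
    moreover have "?e i = 0" if "l' < l"
      using that \<open>q + l < CARD('n)\<close> i
      by (simp add: cart_entry_witness_symz_below_band)
    ultimately show "c i * ?e i = (if snd i = l then c i * ?e i else 0)"
      using above by (cases "l < l'") auto
  qed
  also have "\<dots> = (\<Sum>i\<in>(\<lambda>m. (m + l, l)) ` {..CARD('n) - 1 - l}. c i * ?e i)"
  proof -
    have "(k, l) \<in> (\<lambda>m. (m + l, l)) ` {..CARD('n) - 1 - l}" if "l \<le> k" "k \<le> CARD('n) - 1" for k
      using that by (intro image_eqI [of _ _ "k - l"]) auto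
    then have "{i \<in> ?I. snd i = l} = (\<lambda>m. (m + l, l)) ` {..CARD('n) - 1 - l}"
      using \<open>q + l < CARD('n)\<close> by (auto simp: low_index_def)
    then show ?thesis
      by (simp add: sum.inter_filter [OF finite_low_index, symmetric])
  qed
  also have "\<dots> = (\<Sum>m\<le>CARD('n) - 1 - l.
                      c (m + l, l) * cart_entry (witness_symz m l :: real^'n^'n) (q + l) q)"
    by (simp add: sum.reindex inj_on_def)
  finally show ?thesis
    by simp
qed

lemma lin_indep_witness_symz:
  "lin_indep_family (low_index CARD('n)) (\<lambda>(k, l). witness_symz (k - l) l :: real^'n^'n)"
  unfolding lin_indep_family_def
proof (intro allI impI ballI)
  fix c :: "nat \<times> nat \<Rightarrow> real" and i
  assume zero: "(\<Sum>i\<in>low_index CARD('n).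
                  c i *\<^sub>R (case i of (k, l) \<Rightarrow> (witness_symz (k - l) l :: real^'n^'n))) = 0"
  have "c (k, l) = 0" if "(k, l) \<in> low_index CARD('n)" for k l
    using that
  proof (induction "CARD('n) - l" arbitrary: k l rule: less_induct)
    case less
    define d where "d = CARD('n) - 1 - l"
    have "l \<le> k" "k \<le> CARD('n) - 1"
      using less.prems by (auto simp: low_index_def)
    moreover have "0 < CARD('n)"
      by simp
    ultimately have "l + d < CARD('n)" "k - l \<le> d"
      unfolding d_def by linarith+
    moreover have "(\<Sum>m\<le>d. c (m + l, l) * cart_entry (witness_symz m l :: real^'n^'n) (q + l) q) = 0"
      if "q \<le> d" for q
      unfolding d_def
    proof (rule vanishing_witness_combination_subdiag [OF zero])
      show "c (k', l') = 0" if "(k', l') \<in> low_index CARD('n)" "l < l'" for k' l'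
        using that less.hyps [of l' k'] by (auto simp: low_index_def)
      show "q + l < CARD('n)"
        using that \<open>l + d < CARD('n)\<close> by simp
    qed
    ultimately have "c (k - l + l, l) = 0"
      using coeffs_eq_0_of_forward_difference
        [where D = "\<lambda>m l q. cart_entry (witness_symz m l :: real^'n^'n) (q + l) q"
          and c = "\<lambda>m. c (m + l, l)",
         OF cart_entry_witness_symz_0_subdiag cart_entry_witness_symz_subdiag_diff]
      by blast
    then show ?case
      using \<open>l \<le> k\<close> by simp
  qed
  then show "i \<in> low_index CARD('n) \<Longrightarrow> c i = 0"
    by (cases i) auto
qed

section \<open>Genericity\<close>

lemma nonzero_polynomial_dense_in_convex:
  fixes f :: "'a::real_normed_vector \<Rightarrow> real"
  assumes f: "real_polynomial_function f" and C: "convex C" "w \<in> C" and "f w \<noteq> 0"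
  shows "C \<subseteq> closure {x \<in> C. f x \<noteq> 0}"
proof
  fix z assume "z \<in> C"
  define y where "y t = z + t *\<^sub>R (w - z)" for t :: real
  have "polynomial_function y"
    unfolding y_def
    by (intro polynomial_function_add polynomial_function_mult polynomial_function_const
        polynomial_function_id)
  then have "real_polynomial_function (f \<circ> y)"
    using f by (rule real_polynomial_function_compose)
  then obtain a d where fy: "\<And>t. f (y t) = (\<Sum>i\<le>d. a i * t ^ i)"
    unfolding real_polynomial_function_iff_sum by (metis comp_apply)
  have "\<exists>k\<le>d. a k \<noteq> 0"
  proof (rule ccontr)
    assume "\<not> ?thesis"
    then have "f (y 1) = 0"
      by (simp add: fy)
    moreover have "y 1 = w"
      by (simp add: y_def)
    ultimately show False
      using \<open>f w \<noteq> 0\<close> by simp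
  qed
  then have "finite {t. f (y t) = 0}"
    using polyfun_rootbound_finite [of d a] by (simp add: fy)
  then have "\<not> 0 islimpt {t. f (y t) = 0}"
    by (rule islimpt_finite)
  then have "eventually (\<lambda>t. f (y t) \<noteq> 0) (at 0)"
    by (simp add: islimpt_iff_eventually)
  then have "eventually (\<lambda>t. f (y t) \<noteq> 0) (at_right 0)"
    by (rule filter_leD [OF at_within_le_at])
  moreover have "eventually (\<lambda>t. 0 < t \<and> t < 1) (at_right (0::real))"
    by (rule eventually_at_rightI [of _ 1]) auto
  ultimately have "eventually (\<lambda>t. y t \<in> closure {x \<in> C. f x \<noteq> 0}) (at_right 0)"
  proof eventually_elim
    case (elim t)
    have "y t = (1 - t) *\<^sub>R z + t *\<^sub>R w"
      by (simp add: y_def algebra_simps)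
    then have "y t \<in> C"
      using elim convexD [OF C(1) \<open>z \<in> C\<close> C(2), of "1 - t" t] by simp
    with elim have "y t \<in> {x \<in> C. f x \<noteq> 0}"
      by simp
    then show ?case
      by (rule subsetD [OF closure_subset])
  qed
  moreover have "(y \<longlongrightarrow> z + 0 *\<^sub>R (w - z)) (at_right 0)"
    unfolding y_def by (intro tendsto_intros)
  ultimately show "z \<in> closure {x \<in> C. f x \<noteq> 0}"
    by (intro Lim_in_closed_set [of _ y "at_right 0"]) auto
qed

lemma real_polynomial_function_word_mat_entry:
  "real_polynomial_function
     (\<lambda>x :: (real^'n^'n) \<times> (real^'n^'n). word_mat (fst x) (snd x) w $ i $ (j::'n))"
proof (induction w arbitrary: i)
  case (Cons b w)
  have letter: "real_polynomial_function
      (\<lambda>x :: (real^'n^'n) \<times> (real^'n^'n). (if b then snd x else fst x) $ i $ (k::'n))" for k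
    by (cases b) (auto intro!: real_polynomial_function.intros(1) bounded_linear_fst
        bounded_linear_snd bounded_linear_compose [OF bounded_linear_vec_nth])
  show ?case
    by (simp add: matrix_matrix_mult_def)
      (intro real_polynomial_function_sum real_polynomial_function.intros(4) letter Cons; simp)
qed (simp add: real_polynomial_function.intros(2))

lemma real_polynomial_function_inner_symz:
  "real_polynomial_function (\<lambda>x :: (real^'n^'n) \<times> (real^'n^'n).
     inner (symz a b (fst x) (snd x)) (symz a' b' (fst x) (snd x)))"
  unfolding inner_vec_def inner_real_def symz_def sum_component
  by (intro real_polynomial_function_sum real_polynomial_function.intros(4)
      real_polynomial_function_word_mat_entry) auto

lemma lin_indep_family_iff_vec:
  assumes bij: "bij_betw \<iota> {0..<m} I"
  shows "lin_indep_family I F \<longleftrightarrow>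
    (\<forall>v \<in> carrier_vec m. (\<Sum>b\<in>{0..<m}. v $ b *\<^sub>R F (\<iota> b)) = 0 \<longrightarrow> v = 0\<^sub>v m)"
proof -
  have reindex: "(\<Sum>i\<in>I. c i *\<^sub>R F i) = (\<Sum>b\<in>{0..<m}. c (\<iota> b) *\<^sub>R F (\<iota> b))" for c
    using sum.reindex_bij_betw [OF bij, of "\<lambda>i. c i *\<^sub>R F i"] by simp
  have inv: "\<iota> (inv_into {0..<m} \<iota> i) = i" "inv_into {0..<m} \<iota> i < m" if "i \<in> I" for i
    using bij_betw_inv_into_right [OF bij that] bij_betwE [OF bij_betw_inv_into [OF bij]] that by auto
  have inv': "inv_into {0..<m} \<iota> (\<iota> b) = b" if "b < m" for b
    using bij that by (simp add: bij_betw_inv_into_left)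
  show ?thesis
    unfolding lin_indep_family_def
  proof safe
    fix v :: "real Matrix.vec"
    assume indep: "\<forall>c. (\<Sum>i\<in>I. c i *\<^sub>R F i) = 0 \<longrightarrow> (\<forall>i\<in>I. c i = 0)"
      and "v \<in> carrier_vec m" and zero: "(\<Sum>b\<in>{0..<m}. v $ b *\<^sub>R F (\<iota> b)) = 0"
    have "\<forall>i\<in>I. v $ inv_into {0..<m} \<iota> i = 0"
      using indep [rule_format, of "\<lambda>i. v $ inv_into {0..<m} \<iota> i"] zero
      by (simp add: reindex inv')
    then have "v $ b = 0" if "b < m" for b
      using that inv' bij by (metis atLeastLessThan_iff bij_betwE zero_le)
    then show "v = 0\<^sub>v m"
      using \<open>v \<in> carrier_vec m\<close> by (intro eq_vecI) auto
  next
    fix c i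
    assume vecs: "\<forall>v\<in>carrier_vec m. (\<Sum>b\<in>{0..<m}. v $ b *\<^sub>R F (\<iota> b)) = 0 \<longrightarrow> v = 0\<^sub>v m"
      and zero: "(\<Sum>i\<in>I. c i *\<^sub>R F i) = 0" and "i \<in> I"
    have "Matrix.vec m (\<lambda>b. c (\<iota> b)) = 0\<^sub>v m"
      using vecs zero by (simp add: reindex)
    then have "Matrix.vec m (\<lambda>b. c (\<iota> b)) $ inv_into {0..<m} \<iota> i = 0"
      using inv(2) [OF \<open>i \<in> I\<close>] by simp
    then show "c i = 0"
      using inv [OF \<open>i \<in> I\<close>] by simp
  qed
qed

text \<open>The quadratic form of the Gram matrix is \<open>\<bar>\<Sum>\<^sub>b v\<^sub>b F\<^sub>b\<bar>\<^sup>2\<close>, so its kernel is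
  that of \<open>v \<mapsto> \<Sum>\<^sub>b v\<^sub>b F\<^sub>b\<close>.\<close>
lemma gram_mult_vec_eq_0_iff:
  fixes F :: "nat \<Rightarrow> 'v::real_inner"
  assumes "v \<in> carrier_vec m"
  shows "Matrix.mat m m (\<lambda>(a, b). inner (F a) (F b)) *\<^sub>v v = 0\<^sub>v m
    \<longleftrightarrow> (\<Sum>b\<in>{0..<m}. v $ b *\<^sub>R F b) = 0"
proof -
  define G where "G = Matrix.mat m m (\<lambda>(a, b). inner (F a) (F b))"
  define W where "W = (\<Sum>b\<in>{0..<m}. v $ b *\<^sub>R F b)"
  have entry: "(G *\<^sub>v v) $ a = inner (F a) W" if "a < m" for a
    using that assms by (simp add: G_def W_def scalar_prod_def inner_sum_right mult.commute)
  have "G *\<^sub>v v = 0\<^sub>v m \<longleftrightarrow> (\<forall>a<m. (G *\<^sub>v v) $ a = 0)"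
    by (auto simp: Matrix.vec_eq_iff G_def simp del: index_mult_mat_vec)
  also have "\<dots> \<longleftrightarrow> (\<forall>a<m. inner (F a) W = 0)"
    by (simp add: entry)
  also have "\<dots> \<longleftrightarrow> W = 0"
  proof
    assume "\<forall>a<m. inner (F a) W = 0"
    then have "inner W W = 0"
      by (simp add: W_def inner_sum_left)
    then show "W = 0"
      by simp
  qed simp
  finally show ?thesis
    unfolding G_def W_def .
qed

lemma lin_indep_symz_iff_polynomial_nonzero:
  "\<exists>g. real_polynomial_function g \<and>
     (\<forall>P Q :: real^'n^'n. g (P, Q) \<noteq> 0 \<longleftrightarrow>
        lin_indep_family (low_index CARD('n)) (\<lambda>(k, l). symz (k - l) l P Q))"
proof -
  let ?I = "low_index CARD('n)"
  define m where "m = card ?I"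
  obtain \<iota> where bij: "bij_betw \<iota> {0..<m} ?I"
    using ex_bij_betw_nat_finite [OF finite_low_index] unfolding m_def by blast
  define F where "F x i = symz (fst i - snd i) (snd i) (fst x) (snd x)"
    for x :: "(real^'n^'n) \<times> (real^'n^'n)" and i :: "nat \<times> nat"
  define g where "g x = Determinant.det (Matrix.mat m m (\<lambda>(a, b). inner (F x (\<iota> a)) (F x (\<iota> b))))"
    for x
  have "g = (\<lambda>x. \<Sum>p\<in>{p. p permutes {0..<m}}.
              signof p * (\<Prod>a = 0..<m. inner (F x (\<iota> a)) (F x (\<iota> (p a)))))"
    unfolding g_def
    by (subst det_def' [of _ m]) (auto intro!: sum.cong prod.cong simp: permutes_in_image)
  then have "real_polynomial_function g"
    unfolding F_def
    by (simp only:) (intro real_polynomial_function_sum real_polynomial_function.intros(2,4)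
        real_polynomial_function_prod real_polynomial_function_inner_symz finite_permutations; simp)
  moreover have "g (P, Q) \<noteq> 0 \<longleftrightarrow> lin_indep_family ?I (\<lambda>(k, l). symz (k - l) l P Q)" for P Q
  proof -
    have "(\<lambda>(k, l). symz (k - l) l P Q) = F (P, Q)"
      by (auto simp: F_def)
    then show ?thesis
      unfolding g_def lin_indep_family_iff_vec [OF bij]
      by (simp add: det_0_iff_vec_prod_zero_field [of _ m]
          gram_mult_vec_eq_0_iff [where F = "\<lambda>b. F (P, Q) (\<iota> b)"]) blast
  qed
  ultimately show ?thesis
    by blast
qed

lemma generic_lin_indep_symz:
  "\<exists>U :: ((real^'n^'n) \<times> (real^'n^'n)) set. open U
     \<and> (\<forall>C. convex C \<and> (ramp_diag, skew_shift) \<in> C \<longrightarrow> C \<subseteq> closure (C \<inter> U))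
     \<and> (\<forall>(P, Q)\<in>U. lin_indep_family (low_index CARD('n)) (\<lambda>(k, l). symz (k - l) l P Q))"
proof -
  obtain g :: "(real^'n^'n) \<times> (real^'n^'n) \<Rightarrow> real"
    where poly: "real_polynomial_function g"
      and g: "\<And>P Q :: real^'n^'n. g (P, Q) \<noteq> 0 \<longleftrightarrow>
                lin_indep_family (low_index CARD('n)) (\<lambda>(k, l). symz (k - l) l P Q)"
    using lin_indep_symz_iff_polynomial_nonzero by blast
  define U where "U = {x. g x \<noteq> 0}"
  have "open U"
    unfolding U_def using poly
    by (intro open_Collect_neq continuous_on_polymonial_function)
      (auto simp: real_polynomial_function_eq)
  moreover have "C \<subseteq> closure (C \<inter> U)" if "convex C" "(ramp_diag, skew_shift) \<in> C" for C
  proof -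
    have "g (ramp_diag, skew_shift) \<noteq> 0"
      using lin_indep_witness_symz by (simp add: g)
    moreover have "{x \<in> C. g x \<noteq> 0} = C \<inter> U"
      by (auto simp: U_def)
    ultimately show ?thesis
      using nonzero_polynomial_dense_in_convex [OF poly that] by simp
  qed
  moreover have "\<forall>(P, Q)\<in>U. lin_indep_family (low_index CARD('n)) (\<lambda>(k, l). symz (k - l) l P Q)"
    using g by (auto simp: U_def)
  ultimately show ?thesis
    by (intro exI [of _ U]) auto
qed

theorem lemma4p1:
  fixes A B :: "real^'n^'n"
  shows "(\<forall>i j. commutator (symz i (j+1) A B) A + commutator (symz (i+1) j A B) B = 0)
    \<and> (\<forall>(S::real^'n^'n) (N::real^'n^'n). transpose S = S \<and> transpose N = - N \<longrightarrow>
           (\<forall>i j. transpose (symz i j S N) = (if even j then symz i j S N else - symz i j S N)))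
    \<and> (\<forall>l\<le>CARD('n). \<exists>c :: nat \<times> nat \<Rightarrow> real.
           symz (CARD('n) - l) l A B =
             (\<Sum>p\<in>{p. fst p + snd p < CARD('n)}. c p *\<^sub>R symz (fst p) (snd p) A B))
    \<and> (\<exists>U :: ((real^'n^'n) \<times> (real^'n^'n)) set. open U \<and> closure U = UNIV \<and>
           (\<forall>(P, Q)\<in>U. lin_indep_family (low_index CARD('n))
                           (\<lambda>(k, l). symz (k - l) l P Q)))
    \<and> (\<exists>U :: ((real^'n^'n) \<times> (real^'n^'n)) set. U \<subseteq> sym_skew_pairs \<and>
           openin (top_of_set sym_skew_pairs) U \<and> sym_skew_pairs \<subseteq> closure U \<and>
           (\<forall>(P, Q)\<in>U. lin_indep_family (low_index CARD('n))
                           (\<lambda>(k, l). symz (k - l) l P Q)))"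
proof -
  obtain U :: "((real^'n^'n) \<times> (real^'n^'n)) set"
    where "open U"
      and dense: "\<forall>C. convex C \<and> (ramp_diag, skew_shift) \<in> C \<longrightarrow> C \<subseteq> closure (C \<inter> U)"
      and indep: "\<forall>(P, Q)\<in>U. lin_indep_family (low_index CARD('n)) (\<lambda>(k, l). symz (k - l) l P Q)"
    using generic_lin_indep_symz by (elim exE conjE)
  have "sym_skew_pairs \<subseteq> closure (sym_skew_pairs \<inter> U)"
    using dense convex_sym_skew_pairs witness_in_sym_skew_pairs by blast
  show ?thesis
  proof (intro conjI, goal_cases)
    case 1
    show ?case
      using commutator_symz by blast
  next
    case 2
    show ?case
      by (simp add: transpose_symz)
  next
    case 3
    show ?case
      using in_span_image_sum [OF finite_pairs_sum_less symz_CARD_in_span] by blast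
  next
    case 4
    show ?case
      using \<open>open U\<close> dense [rule_format, of UNIV] indep by (intro exI [of _ U]) auto
  next
    case 5
    show ?case
      using \<open>open U\<close> \<open>sym_skew_pairs \<subseteq> closure (sym_skew_pairs \<inter> U)\<close> indep
      by (intro exI [of _ "sym_skew_pairs \<inter> U"]) (auto intro: openin_open_Int)
  qed
qed

end
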